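(* Let $d\ge2$, $L\ge1$ an integer and $0<x<\frac{1}{(2d-1)!}$. Let $\Gamma\subset B_L=[0,L)^d\cap\mathbb Z^d$ be such that for every $i\in\{1,\dots,d\}$, $\Gamma$ contains (entirely) at least $(1-x)L^{d-1}$ columns of $B_L$ parallel to $e_i$. Then $\Gamma$ contains a connected subset (for the nearest-neighbour graph of $\mathbb Z^d$) of cardinality at least $(1-(2d-1)!\,x)L^d$.
   Context: $e_1,\dots,e_d$ is the standard basis of $\mathbb Z^d$. A column of $B_L$ parallel to $e_i$ is a set of the form $\{y\in B_L: y_j=a_j\text{ for all }j\neq i\}$ for fixed integers $(a_j)_{j\neq i}$ with $0\le a_j<L$. *)

theory Defs
  imports Complex_Main
begin

text \<open>Points of Z^d are represented as functions nat => int, with coordinates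
  indexed by 0..d-1 and all coordinates >= d equal to 0.\<close>

definition box :: "nat \<Rightarrow> nat \<Rightarrow> (nat \<Rightarrow> int) set" where
  "box d L = {y. (\<forall>j<d. 0 \<le> y j \<and> y j < int L) \<and> (\<forall>j\<ge>d. y j = 0)}"

definition column :: "nat \<Rightarrow> nat \<Rightarrow> nat \<Rightarrow> (nat \<Rightarrow> int) set \<Rightarrow> bool" where
  "column d L i C \<longleftrightarrow> (\<exists>a :: nat \<Rightarrow> int.
      (\<forall>j<d. j \<noteq> i \<longrightarrow> 0 \<le> a j \<and> a j < int L) \<and>
      C = {y \<in> box d L. \<forall>j<d. j \<noteq> i \<longrightarrow> y j = a j})"

definition nn_adj :: "nat \<Rightarrow> (nat \<Rightarrow> int) \<Rightarrow> (nat \<Rightarrow> int) \<Rightarrow> bool" where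
  "nn_adj d y z \<longleftrightarrow> (\<Sum>j<d. \<bar>y j - z j\<bar>) = 1"

definition nn_connected :: "nat \<Rightarrow> (nat \<Rightarrow> int) set \<Rightarrow> bool" where
  "nn_connected d S \<longleftrightarrow>
     (\<forall>y\<in>S. \<forall>z\<in>S. (\<lambda>a b. a \<in> S \<and> b \<in> S \<and> nn_adj d a b)\<^sup>*\<^sup>* y z)"

end

theory Submission
  imports Defs
begin

(* Induction on the dimension, slicing B_L^(m+1) along the last coordinate. A column of a slice
   parallel to e_i (i < m) is a column of the box, so the normalised numbers y(t) of columns missing
   from the slices sum to at most m x L. On a good slice, 4 (2m-1)! y(t) <= 1, induction gives a
   connected set of size at least (1 - (2m-1)! y(t)) L^m >= 3/4 L^m. Two such sets and the
   at least (1-x) L^m feet of full vertical columns occupy more than 2 L^m points of B_L^m, so some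
   full vertical column meets both; these columns glue the good slices into one connected set of size
   at least the sum over good t of (1 - (2m-1)! y(t)) L^m >= (1 - 4m (2m-1)! x) L^(m+1). *)

definition nn_edge :: "nat \<Rightarrow> (nat \<Rightarrow> int) set \<Rightarrow> (nat \<Rightarrow> int) \<Rightarrow> (nat \<Rightarrow> int) \<Rightarrow> bool" where
  "nn_edge d S = (\<lambda>a b. a \<in> S \<and> b \<in> S \<and> nn_adj d a b)"

lemma nn_connected_iff_edge: "nn_connected d S \<longleftrightarrow> (\<forall>y\<in>S. \<forall>z\<in>S. (nn_edge d S)\<^sup>*\<^sup>* y z)"
  by (simp add: nn_connected_def nn_edge_def)

lemma symp_nn_edge: "symp (nn_edge d S)"
  by (auto simp: symp_def nn_edge_def nn_adj_def abs_minus_commute)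

lemma nn_edge_mono: "S \<subseteq> T \<Longrightarrow> nn_edge d S \<le> nn_edge d T"
  by (auto simp: nn_edge_def)

lemma nn_adj_upd_Suc: "i < d \<Longrightarrow> nn_adj d (a(i := t)) (a(i := t + 1))"
proof -
  assume "i < d"
  then have "(\<Sum>j<d. \<bar>(a(i := t)) j - (a(i := t + 1)) j\<bar>) = (\<Sum>j<d. if j = i then 1 else 0)"
    by (intro sum.cong) auto
  with \<open>i < d\<close> show ?thesis by (simp add: nn_adj_def)
qed

lemma nn_adj_upd_last: "nn_adj (Suc m) (z(m := t)) (w(m := t)) \<longleftrightarrow> nn_adj m z w"
  by (simp add: nn_adj_def)

definition line :: "nat \<Rightarrow> nat \<Rightarrow> (nat \<Rightarrow> int) \<Rightarrow> (nat \<Rightarrow> int) set" where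
  "line L i a = (\<lambda>t. a(i := t)) ` {0..<int L}"

lemma card_line: "card (line L i a) = L"
proof -
  have "inj_on (\<lambda>t. a(i := t)) {0..<int L}"
    by (auto simp: inj_on_def dest: fun_cong[where x = i])
  then show ?thesis by (simp add: line_def card_image)
qed

lemma nn_connected_line:
  assumes "i < d"
  shows "nn_connected d (line L i a)"
proof -
  let ?R = "nn_edge d (line L i a)"
  have up: "?R\<^sup>*\<^sup>* (a(i := s)) (a(i := s + int k))" if "0 \<le> s" "s + int k < int L" for s k
    using that
  proof (induction k)
    case (Suc k)
    then have "?R (a(i := s + int k)) (a(i := s + int k + 1))"
      using nn_adj_upd_Suc[OF assms] by (auto simp: nn_edge_def line_def)
    moreover have "?R\<^sup>*\<^sup>* (a(i := s)) (a(i := s + int k))" by (rule Suc.IH) (use Suc.prems in auto)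
    ultimately have "?R\<^sup>*\<^sup>* (a(i := s)) (a(i := s + int k + 1))"
      by (meson rtranclp.rtrancl_into_rtrancl)
    then show ?case by (simp only: of_nat_Suc ac_simps)
  qed simp
  have "?R\<^sup>*\<^sup>* (a(i := s)) (a(i := t))" if "s \<in> {0..<int L}" "t \<in> {0..<int L}" for s t
  proof (cases "s \<le> t")
    case True
    then show ?thesis using up[of s "nat (t - s)"] that by simp
  next
    case False
    then have "?R\<^sup>*\<^sup>* (a(i := t)) (a(i := s))" using up[of t "nat (s - t)"] that by simp
    then show ?thesis using symp_nn_edge sympD symp_rtranclp by metis
  qed
  then show ?thesis by (auto simp: nn_connected_iff_edge line_def)
qed

lemma nn_connected_slice_embedding:
  assumes "nn_connected m C"
  shows "nn_connected (Suc m) ((\<lambda>z. z(m := t)) ` C)"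
proof -
  have "(nn_edge (Suc m) ((\<lambda>z. z(m := t)) ` C))\<^sup>*\<^sup>* (u(m := t)) (v(m := t))"
    if "(nn_edge m C)\<^sup>*\<^sup>* u v" for u v
    using that
  proof (induction rule: rtranclp_induct)
    case (step v w)
    then have "nn_edge (Suc m) ((\<lambda>z. z(m := t)) ` C) (v(m := t)) (w(m := t))"
      by (auto simp: nn_edge_def nn_adj_upd_last)
    with step.IH show ?case by (meson rtranclp.rtrancl_into_rtrancl)
  qed simp
  with assms show ?thesis by (auto simp: nn_connected_iff_edge)
qed

lemma nn_connected_Union:
  assumes conn: "\<And>A. A \<in> \<A> \<Longrightarrow> nn_connected d A"
    and chain: "\<And>A B. A \<in> \<A> \<Longrightarrow> B \<in> \<A> \<Longrightarrow> (\<lambda>A B. A \<in> \<A> \<and> B \<in> \<A> \<and> A \<inter> B \<noteq> {})\<^sup>*\<^sup>* A B"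
  shows "nn_connected d (\<Union>\<A>)"
proof -
  let ?R = "nn_edge d (\<Union>\<A>)"
  have within: "?R\<^sup>*\<^sup>* y z" if "A \<in> \<A>" "y \<in> A" "z \<in> A" for A y z
    using conn[OF that(1)] that rtranclp_mono[OF nn_edge_mono[of A "\<Union>\<A>"]]
    by (auto simp: nn_connected_iff_edge)
  have "?R\<^sup>*\<^sup>* y z" if "(\<lambda>A B. A \<in> \<A> \<and> B \<in> \<A> \<and> A \<inter> B \<noteq> {})\<^sup>*\<^sup>* A B"
    "A \<in> \<A>" "y \<in> A" "z \<in> B" for A B y z
    using that
  proof (induction arbitrary: z rule: rtranclp_induct)
    case base
    then show ?case using within by blast
  next
    case (step B B')
    then obtain w where "w \<in> B" "w \<in> B'" by blast
    then show ?case using step within by (meson rtranclp_trans)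
  qed
  then show ?thesis using chain unfolding nn_connected_iff_edge by blast
qed

lemma box_0: "box 0 L = {\<lambda>_. 0}"
  by (auto simp: box_def)

lemma box_Suc: "box (Suc d) L = (\<lambda>(t, z). z(d := t)) ` ({0..<int L} \<times> box d L)"
proof
  show "box (Suc d) L \<subseteq> (\<lambda>(t, z). z(d := t)) ` ({0..<int L} \<times> box d L)"
  proof
    fix y assume "y \<in> box (Suc d) L"
    then have "(y d, y(d := 0)) \<in> {0..<int L} \<times> box d L"
      by (auto simp: box_def less_Suc_eq)
    then show "y \<in> (\<lambda>(t, z). z(d := t)) ` ({0..<int L} \<times> box d L)"
      by (rule rev_image_eqI) simp
  qed
qed (auto simp: box_def less_Suc_eq)

lemma inj_on_upd_box: "inj_on (\<lambda>(t, z). z(d := t)) (A \<times> box d L)"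
  by (auto simp: inj_on_def box_def fun_eq_iff)

lemma finite_box: "finite (box d L)"
  by (induction d) (auto simp: box_0 box_Suc)

lemma card_box: "card (box d L) = L ^ d"
proof (induction d)
  case 0
  then show ?case by (simp add: box_0)
next
  case (Suc d)
  have "card (box (Suc d) L) = card ({0..<int L} \<times> box d L)"
    unfolding box_Suc by (rule card_image[OF inj_on_upd_box])
  with Suc show ?case by (simp add: card_cartesian_product)
qed

definition base_face :: "nat \<Rightarrow> nat \<Rightarrow> nat \<Rightarrow> (nat \<Rightarrow> int) set" where
  "base_face d L i = {a \<in> box d L. a i = 0}"

definition full_columns :: "nat \<Rightarrow> nat \<Rightarrow> (nat \<Rightarrow> int) set \<Rightarrow> nat \<Rightarrow> (nat \<Rightarrow> int) set" where
  "full_columns d L G i = {a \<in> base_face d L i. line L i a \<subseteq> G}"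

lemma card_base_face:
  assumes "i < d" "1 \<le> L"
  shows "card (base_face d L i) = L ^ (d - 1)"
proof -
  have "bij_betw (\<lambda>y. (y(i := 0), y i)) (box d L) (base_face d L i \<times> {0..<int L})"
    by (rule bij_betw_byWitness[where f' = "\<lambda>(z, t). z(i := t)"])
      (use assms in \<open>auto simp: box_def base_face_def\<close>)
  then have "L ^ d = card (base_face d L i) * L"
    using bij_betw_same_card by (fastforce simp: card_box card_cartesian_product)
  moreover have "L ^ d = L ^ (d - 1) * L"
    using assms by (cases d) (auto simp: mult.commute)
  ultimately show ?thesis
    using assms(2) by simp
qed

lemma card_full_columns_le:
  assumes "i < d" "1 \<le> L"
  shows "card (full_columns d L G i) \<le> L ^ (d - 1)"
proof -
  have "finite (base_face d L i)"
    using finite_box by (rule finite_subset[rotated]) (auto simp: base_face_def)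
  then have "card (full_columns d L G i) \<le> card (base_face d L i)"
    by (rule card_mono) (auto simp: full_columns_def)
  then show ?thesis
    using card_base_face[OF assms] by simp
qed

lemma line_eq_column_set:
  assumes "i < d" "a \<in> base_face d L i"
  shows "line L i a = {y \<in> box d L. \<forall>j<d. j \<noteq> i \<longrightarrow> y j = a j}"
proof
  show "{y \<in> box d L. \<forall>j<d. j \<noteq> i \<longrightarrow> y j = a j} \<subseteq> line L i a"
  proof
    fix y assume y: "y \<in> {y \<in> box d L. \<forall>j<d. j \<noteq> i \<longrightarrow> y j = a j}"
    have "y = a(i := y i)"
    proof
      fix j show "y j = (a(i := y i)) j"
        using y assms by (cases "j < d") (auto simp: base_face_def box_def)
    qed
    moreover have "y i \<in> {0..<int L}" using y assms by (auto simp: box_def)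
    ultimately show "y \<in> line L i a" unfolding line_def by blast
  qed
qed (use assms in \<open>auto simp: line_def base_face_def box_def\<close>)

lemma column_iff_line:
  assumes "i < d" "1 \<le> L"
  shows "column d L i C \<longleftrightarrow> (\<exists>a \<in> base_face d L i. C = line L i a)"
proof
  assume "column d L i C"
  then obtain a where a: "\<forall>j<d. j \<noteq> i \<longrightarrow> 0 \<le> a j \<and> a j < int L"
    and C: "C = {y \<in> box d L. \<forall>j<d. j \<noteq> i \<longrightarrow> y j = a j}"
    by (auto simp: column_def)
  define a' where "a' = (\<lambda>j. if j < d \<and> j \<noteq> i then a j else 0)"
  have a': "a' \<in> base_face d L i"
    using a assms by (auto simp: a'_def base_face_def box_def)
  have "C = line L i a'"
    unfolding line_eq_column_set[OF assms(1) a'] C by (auto simp: a'_def)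
  with a' show "\<exists>a \<in> base_face d L i. C = line L i a" by blast
next
  assume "\<exists>a \<in> base_face d L i. C = line L i a"
  then show "column d L i C"
    unfolding column_def
    by (metis (lifting) line_eq_column_set[OF assms(1)] base_face_def box_def mem_Collect_eq)
qed

lemma inj_on_line: "1 \<le> L \<Longrightarrow> inj_on (line L i) (base_face d L i)"
proof
  fix a b assume L: "1 \<le> L" and a: "a \<in> base_face d L i" and b: "b \<in> base_face d L i"
    and eq: "line L i a = line L i b"
  have "a = a(i := 0)" using a by (auto simp: base_face_def)
  also have "\<dots> \<in> line L i b" using L eq by (auto simp: line_def)
  finally obtain t where "a = b(i := t)" by (auto simp: line_def)
  with a b show "a = b" by (auto simp: base_face_def fun_upd_idem)
qed

lemma card_columns_subset:
  assumes "i < d" "1 \<le> L"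
  shows "card {C. column d L i C \<and> C \<subseteq> G} = card (full_columns d L G i)"
proof -
  have "{C. column d L i C \<and> C \<subseteq> G} = line L i ` full_columns d L G i"
    by (auto simp: column_iff_line[OF assms] full_columns_def)
  moreover have "inj_on (line L i) (full_columns d L G i)"
    using inj_on_line[OF assms(2)] by (rule inj_on_subset) (auto simp: full_columns_def)
  ultimately show ?thesis by (simp add: card_image)
qed

definition slice :: "nat \<Rightarrow> nat \<Rightarrow> (nat \<Rightarrow> int) set \<Rightarrow> int \<Rightarrow> (nat \<Rightarrow> int) set" where
  "slice m L G t = {z \<in> box m L. z(m := t) \<in> G}"

lemma upd_mem_full_columns_Suc_iff:
  assumes "i < m" "z \<in> box m L" "t \<in> {0..<int L}"
  shows "z(m := t) \<in> full_columns (Suc m) L G i \<longleftrightarrow> z \<in> full_columns m L (slice m L G t) i"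
proof -
  have "line L i (z(m := t)) = (\<lambda>y. y(m := t)) ` line L i z"
    using assms(1) by (auto simp: line_def fun_upd_twist image_image)
  moreover have "(\<lambda>y. y(m := t)) ` line L i z \<subseteq> G \<longleftrightarrow> line L i z \<subseteq> slice m L G t"
    using assms(1,2) by (auto simp: line_def slice_def box_def)
  ultimately show ?thesis
    using assms by (auto simp: full_columns_def base_face_def box_def less_Suc_eq)
qed

lemma card_full_columns_Suc:
  assumes "i < m"
  shows "card (full_columns (Suc m) L G i) = (\<Sum>t\<in>{0..<int L}. card (full_columns m L (slice m L G t) i))"
proof -
  let ?FC = "\<lambda>t. full_columns m L (slice m L G t) i"
  have sub: "?FC t \<subseteq> box m L" for t
    by (auto simp: full_columns_def base_face_def)
  have "full_columns (Suc m) L G i = (\<lambda>(t, z). z(m := t)) ` (SIGMA t:{0..<int L}. ?FC t)"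
  proof
    have "full_columns (Suc m) L G i \<subseteq> box (Suc m) L"
      by (auto simp: full_columns_def base_face_def)
    then show "full_columns (Suc m) L G i \<subseteq> (\<lambda>(t, z). z(m := t)) ` (SIGMA t:{0..<int L}. ?FC t)"
      unfolding box_Suc using upd_mem_full_columns_Suc_iff[OF assms] by (force simp: image_iff)
  qed (use sub in \<open>force simp: upd_mem_full_columns_Suc_iff[OF assms]\<close>)
  moreover have "inj_on (\<lambda>(t, z). z(m := t)) (SIGMA t:{0..<int L}. ?FC t)"
    by (rule inj_on_subset[OF inj_on_upd_box]) (use sub in blast)
  ultimately have "card (full_columns (Suc m) L G i) = card (SIGMA t:{0..<int L}. ?FC t)"
    by (simp add: card_image)
  also have "\<dots> = (\<Sum>t\<in>{0..<int L}. card (?FC t))"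
    by (rule card_SigmaI) (auto intro: finite_subset[OF sub finite_box])
  finally show ?thesis .
qed

lemma three_subsets_meet:
  assumes "finite U" "A \<subseteq> U" "B \<subseteq> U" "C \<subseteq> U"
    and "2 * card U < card A + card B + card C"
  shows "A \<inter> B \<inter> C \<noteq> {}"
proof -
  have fin: "finite A" "finite B" "finite C"
    using assms(1-4) finite_subset by blast+
  have "card (A \<union> B) + card (A \<inter> B) = card A + card B"
    using card_Un_Int[of A B] fin by simp
  moreover have "card (A \<inter> B \<union> C) + card (A \<inter> B \<inter> C) = card (A \<inter> B) + card C"
    using card_Un_Int[of "A \<inter> B" C] fin by simp
  moreover have "card (A \<union> B) \<le> card U" "card (A \<inter> B \<union> C) \<le> card U"
    using assms(1-4) by (auto intro: card_mono)
  ultimately have "card (A \<inter> B \<inter> C) > 0"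
    using assms(5) by linarith
  then show ?thesis by auto
qed

lemma sum_le_sum_over_small_values:
  fixes y :: "'a \<Rightarrow> real"
  assumes "finite T" "\<And>t. t \<in> T \<Longrightarrow> 0 \<le> y t" "0 \<le> c"
  shows "(\<Sum>t\<in>T. 1 - 4 * c * y t) \<le> (\<Sum>t\<in>{t\<in>T. 4 * c * y t \<le> 1}. 1 - c * y t)"
proof -
  have "(\<Sum>t\<in>T. 1 - 4 * c * y t) \<le> (\<Sum>t\<in>T. if 4 * c * y t \<le> 1 then 1 - c * y t else 0)"
    using assms(2,3) by (intro sum_mono) auto
  also have "\<dots> = (\<Sum>t\<in>{t\<in>T. 4 * c * y t \<le> 1}. 1 - c * y t)"
    using assms(1) by (simp add: sum.inter_filter)
  finally show ?thesis .
qed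

lemma fact_odd_Suc_ge:
  assumes "1 \<le> m"
  shows "4 * real m * fact (2 * m - 1) \<le> (fact (2 * Suc m - 1) :: real)"
proof -
  have "fact (2 * Suc m - 1) = (real (2 * m + 1) * real (2 * m)) * (fact (2 * m - 1) :: real)"
    using assms fact_Suc[of "2 * m", where 'a = real] fact_Suc[of "2 * m - 1", where 'a = real]
    by (simp add: Suc_diff_le)
  moreover have "4 * real m \<le> real (2 * m + 1) * real (2 * m)"
    using assms by simp
  ultimately show ?thesis
    by (simp only:) (rule mult_right_mono, simp_all)
qed

definition column_dense :: "nat \<Rightarrow> nat \<Rightarrow> real \<Rightarrow> (nat \<Rightarrow> int) set \<Rightarrow> bool" where
  "column_dense d L x G \<longleftrightarrow> G \<subseteq> box d L \<and>
     (\<forall>i<d. (1 - x) * real L ^ (d - 1) \<le> real (card (full_columns d L G i)))"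

definition slice_deficiency :: "nat \<Rightarrow> nat \<Rightarrow> (nat \<Rightarrow> int) set \<Rightarrow> int \<Rightarrow> real" where
  "slice_deficiency m L G t =
     (\<Sum>i<m. 1 - real (card (full_columns m L (slice m L G t) i)) / real L ^ (m - 1))"

lemma slice_deficiency_term_nonneg:
  "i < m \<Longrightarrow> 1 \<le> L \<Longrightarrow> 0 \<le> 1 - real (card (full_columns m L H i)) / real L ^ (m - 1)"
  using card_full_columns_le[of i m L H] by (simp add: field_simps flip: of_nat_power)

lemma slice_deficiency_nonneg: "1 \<le> L \<Longrightarrow> 0 \<le> slice_deficiency m L G t"
  unfolding slice_deficiency_def by (intro sum_nonneg slice_deficiency_term_nonneg) auto

lemma column_dense_slice:
  assumes "1 \<le> L"
  shows "column_dense m L (slice_deficiency m L G t) (slice m L G t)"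
  unfolding column_dense_def
proof (intro conjI allI impI)
  fix i assume "i < m"
  define P where "P = real L ^ (m - 1)"
  let ?f = "\<lambda>i. real (card (full_columns m L (slice m L G t) i))"
  have "1 - ?f i / P \<le> slice_deficiency m L G t"
    unfolding slice_deficiency_def P_def using \<open>i < m\<close> assms
    by (intro member_le_sum slice_deficiency_term_nonneg) auto
  moreover have "P > 0" using assms by (simp add: P_def)
  ultimately show "(1 - slice_deficiency m L G t) * real L ^ (m - 1) \<le> ?f i"
    unfolding P_def[symmetric] by (simp add: field_simps)
qed (auto simp: slice_def)

lemma sum_slice_deficiency_le:
  assumes "1 \<le> L" "column_dense (Suc m) L x G"
  shows "(\<Sum>t\<in>{0..<int L}. slice_deficiency m L G t) \<le> real m * x * real L"
proof -
  define P where "P = real L ^ (m - 1)"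
  have "P > 0" using assms(1) by (simp add: P_def)
  have "(\<Sum>t\<in>{0..<int L}. slice_deficiency m L G t)
      = (\<Sum>i<m. real L - real (card (full_columns (Suc m) L G i)) / P)"
    unfolding slice_deficiency_def P_def
    by (subst sum.swap) (simp add: sum_subtractf card_full_columns_Suc flip: sum_divide_distrib)
  also have "\<dots> \<le> (\<Sum>i<m. x * real L)"
  proof (rule sum_mono)
    fix i assume "i \<in> {..<m}"
    then have "real L ^ m = real L * P" by (cases m) (auto simp: P_def)
    moreover have "(1 - x) * real L ^ m \<le> real (card (full_columns (Suc m) L G i))"
      using assms(2) \<open>i \<in> {..<m}\<close> by (auto simp: column_dense_def)
    ultimately show "real L - real (card (full_columns (Suc m) L G i)) / P \<le> x * real L"
      using \<open>P > 0\<close> by (simp add: field_simps)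
  qed
  finally show ?thesis by simp
qed

lemma sum_over_good_slices_ge:
  assumes "1 \<le> L" "0 \<le> x" "1 \<le> c" "4 * real m * c \<le> N" "column_dense (Suc m) L x G"
  defines "y \<equiv> slice_deficiency m L G"
  shows "(1 - N * x) * real L ^ Suc m \<le> (\<Sum>t\<in>{t \<in> {0..<int L}. 4 * c * y t \<le> 1}. (1 - c * y t) * real L ^ m)"
proof -
  have "(1 - N * x) * real L \<le> real L - 4 * c * (real m * x * real L)"
    using mult_right_mono[OF assms(4), of "x * real L"] assms(2) by (simp add: algebra_simps)
  also have "\<dots> \<le> real L - 4 * c * (\<Sum>t\<in>{0..<int L}. y t)"
    using sum_slice_deficiency_le[OF assms(1,5)] assms(3) by (simp add: y_def)
  also have "\<dots> = (\<Sum>t\<in>{0..<int L}. 1 - 4 * c * y t)"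
    by (simp add: sum_subtractf sum_distrib_left)
  also have "\<dots> \<le> (\<Sum>t\<in>{t \<in> {0..<int L}. 4 * c * y t \<le> 1}. 1 - c * y t)"
    using slice_deficiency_nonneg[OF assms(1)] assms(3)
    by (intro sum_le_sum_over_small_values) (auto simp: y_def)
  finally have "(1 - N * x) * real L * real L ^ m
      \<le> (\<Sum>t\<in>{t \<in> {0..<int L}. 4 * c * y t \<le> 1}. 1 - c * y t) * real L ^ m"
    by (rule mult_right_mono) simp
  then show ?thesis
    by (simp add: sum_distrib_right mult.assoc)
qed

lemma card_UN_lifted_slices:
  assumes "finite I" "\<And>t. t \<in> I \<Longrightarrow> C t \<subseteq> box m L"
  shows "card (\<Union>t\<in>I. (\<lambda>z. z(m := t)) ` C t) = (\<Sum>t\<in>I. card (C t))"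
proof -
  have "(\<Union>t\<in>I. (\<lambda>z. z(m := t)) ` C t) = (\<lambda>(t, z). z(m := t)) ` (SIGMA t:I. C t)"
    by auto
  moreover have "inj_on (\<lambda>(t, z). z(m := t)) (SIGMA t:I. C t)"
    using assms(2) by (intro inj_on_subset[OF inj_on_upd_box]) auto
  ultimately have "card (\<Union>t\<in>I. (\<lambda>z. z(m := t)) ` C t) = card (SIGMA t:I. C t)"
    by (simp add: card_image)
  also have "\<dots> = (\<Sum>t\<in>I. card (C t))"
    using assms by (intro card_SigmaI) (auto intro: finite_subset[OF _ finite_box])
  finally show ?thesis .
qed

lemma connected_union_of_slices:
  fixes C :: "int \<Rightarrow> (nat \<Rightarrow> int) set"
  assumes "G \<subseteq> box (Suc m) L" "I \<subseteq> {0..<int L}"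
    and slices: "\<And>t. t \<in> I \<Longrightarrow> C t \<subseteq> slice m L G t"
    and connected: "\<And>t. t \<in> I \<Longrightarrow> nn_connected m (C t)"
    and meet: "\<And>t s. t \<in> I \<Longrightarrow> s \<in> I \<Longrightarrow> C t \<inter> C s \<inter> full_columns (Suc m) L G m \<noteq> {}"
  shows "\<exists>S \<subseteq> G. nn_connected (Suc m) S \<and> (\<Sum>t\<in>I. card (C t)) \<le> card S"
proof -
  define F where "F = full_columns (Suc m) L G m"
  define lift where "lift t = (\<lambda>z. z(m := t)) ` C t" for t
  define \<A> where "\<A> = lift ` I \<union> line L m ` {a \<in> F. \<exists>t\<in>I. a \<in> C t}"
  define ov where "ov = (\<lambda>A B. A \<in> \<A> \<and> B \<in> \<A> \<and> A \<inter> B \<noteq> {})"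
  have "symp ov" by (auto simp: symp_def ov_def)
  then have ov_sym: "ov\<^sup>*\<^sup>* A B \<Longrightarrow> ov\<^sup>*\<^sup>* B A" for A B
    by (meson symp_rtranclp sympD)
  have lift_line: "ov (lift t) (line L m a)" if "t \<in> I" "a \<in> F" "a \<in> C t" for t a
  proof -
    have "a(m := t) \<in> lift t \<inter> line L m a"
      using that assms(2) by (auto simp: lift_def line_def)
    with that show ?thesis by (auto simp: \<A>_def ov_def)
  qed
  have lift_lift: "ov\<^sup>*\<^sup>* (lift t) (lift s)" if ts: "t \<in> I" "s \<in> I" for t s
  proof -
    obtain a where "a \<in> C t" "a \<in> C s" "a \<in> F"
      using meet[OF ts] by (auto simp: F_def)
    then have "ov (lift t) (line L m a)" "ov (lift s) (line L m a)"
      using lift_line ts by auto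
    then show ?thesis
      using ov_sym by (meson converse_rtranclp_into_rtranclp r_into_rtranclp)
  qed
  have to_lift: "\<exists>t\<in>I. ov\<^sup>*\<^sup>* A (lift t)" if "A \<in> \<A>" for A
    using that lift_line ov_sym unfolding \<A>_def by blast
  have "nn_connected (Suc m) (\<Union>\<A>)"
  proof (rule nn_connected_Union)
    show "nn_connected (Suc m) A" if "A \<in> \<A>" for A
      using that connected nn_connected_slice_embedding nn_connected_line[of m "Suc m"]
      by (auto simp: \<A>_def lift_def)
    show "(\<lambda>A B. A \<in> \<A> \<and> B \<in> \<A> \<and> A \<inter> B \<noteq> {})\<^sup>*\<^sup>* A B" if "A \<in> \<A>" "B \<in> \<A>" for A B
      using to_lift[OF that(1)] to_lift[OF that(2)] lift_lift ov_sym
      unfolding ov_def[symmetric] by (meson rtranclp_trans)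
  qed
  moreover have "\<Union>\<A> \<subseteq> G"
    using slices by (auto simp: \<A>_def lift_def slice_def F_def full_columns_def)
  moreover have "(\<Sum>t\<in>I. card (C t)) \<le> card (\<Union>\<A>)"
  proof -
    have "finite (\<Union>\<A>)"
      using \<open>\<Union>\<A> \<subseteq> G\<close> assms(1) finite_box by (rule finite_subset[OF order_trans])
    moreover have "(\<Union>t\<in>I. lift t) \<subseteq> \<Union>\<A>" by (auto simp: \<A>_def)
    ultimately have "card (\<Union>t\<in>I. lift t) \<le> card (\<Union>\<A>)" by (rule card_mono)
    moreover have "card (\<Union>t\<in>I. lift t) = (\<Sum>t\<in>I. card (C t))"
      unfolding lift_def using slices finite_subset[OF assms(2)]
      by (intro card_UN_lifted_slices) (auto simp: slice_def)
    ultimately show ?thesis by simp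
  qed
  ultimately show ?thesis by blast
qed

lemma good_slices_meet:
  assumes "1 \<le> L" "x < 1 / 2" "column_dense (Suc m) L x G"
    and "A \<subseteq> box m L" "B \<subseteq> box m L"
    and "3 / 4 * real L ^ m \<le> real (card A)" "3 / 4 * real L ^ m \<le> real (card B)"
  shows "A \<inter> B \<inter> full_columns (Suc m) L G m \<noteq> {}"
proof (rule three_subsets_meet[OF finite_box assms(4,5)])
  show "full_columns (Suc m) L G m \<subseteq> box m L"
    unfolding full_columns_def base_face_def box_def
    by (fastforce simp: less_Suc_eq Suc_le_eq dest: le_imp_less_or_eq)
  have "(1 - x) * real L ^ m \<le> real (card (full_columns (Suc m) L G m))"
    using assms(3) by (auto simp: column_dense_def)
  moreover have "2 * real L ^ m < 3 / 4 * real L ^ m + 3 / 4 * real L ^ m + (1 - x) * real L ^ m"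
    using assms(1,2) by (simp add: algebra_simps)
  ultimately have "real (2 * card (box m L)) < real (card A + card B + card (full_columns (Suc m) L G m))"
    using assms(6,7) by (simp add: card_box)
  then show "2 * card (box m L) < card A + card B + card (full_columns (Suc m) L G m)"
    by (simp only: of_nat_less_iff)
qed

lemma large_connected_subset_Suc:
  assumes "1 \<le> m" "1 \<le> L"
    and IH: "\<And>x G. 0 \<le> x \<Longrightarrow> x < 1 / fact (2 * m - 1) \<Longrightarrow> column_dense m L x G \<Longrightarrow>
      \<exists>S \<subseteq> G. nn_connected m S \<and> (1 - fact (2 * m - 1) * x) * real L ^ m \<le> real (card S)"
    and "0 \<le> x" "x < 1 / fact (2 * Suc m - 1)" and dense: "column_dense (Suc m) L x G"
  shows "\<exists>S \<subseteq> G. nn_connected (Suc m) S \<and>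
    (1 - fact (2 * Suc m - 1) * x) * real L ^ Suc m \<le> real (card S)"
proof -
  define c :: real where "c = fact (2 * m - 1)"
  define y where "y = slice_deficiency m L G"
  define I where "I = {t \<in> {0..<int L}. 4 * c * y t \<le> 1}"
  have "1 \<le> c" by (simp add: c_def)
  have y_nonneg: "0 \<le> y t" for t
    using slice_deficiency_nonneg[OF assms(2)] by (simp add: y_def)
  have "\<forall>t\<in>I. \<exists>C. C \<subseteq> slice m L G t \<and> nn_connected m C \<and> (1 - c * y t) * real L ^ m \<le> real (card C)"
  proof
    fix t assume "t \<in> I"
    then have "y t < 1 / c" using \<open>1 \<le> c\<close> by (auto simp: I_def field_simps)
    then show "\<exists>C. C \<subseteq> slice m L G t \<and> nn_connected m C \<and> (1 - c * y t) * real L ^ m \<le> real (card C)"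
      using IH[of "y t" "slice m L G t"] y_nonneg column_dense_slice[OF assms(2), of m G t]
      by (simp add: c_def y_def)
  qed
  then obtain C where C: "\<And>t. t \<in> I \<Longrightarrow>
    C t \<subseteq> slice m L G t \<and> nn_connected m (C t) \<and> (1 - c * y t) * real L ^ m \<le> real (card (C t))"
    by (auto dest!: bchoice)
  have large: "3 / 4 * real L ^ m \<le> real (card (C t))" if "t \<in> I" for t
  proof -
    have "3 / 4 \<le> 1 - c * y t" using that by (auto simp: I_def)
    then have "3 / 4 * real L ^ m \<le> (1 - c * y t) * real L ^ m"
      by (rule mult_right_mono) simp
    with C[OF that] show ?thesis by linarith
  qed
  have fact_ge: "4 * real m * c \<le> fact (2 * Suc m - 1)"
    using fact_odd_Suc_ge[OF assms(1)] by (simp add: c_def)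
  moreover have "4 \<le> 4 * real m * c" using assms(1) \<open>1 \<le> c\<close> mult_mono[of 1 "real m" 1 c] by simp
  ultimately have "1 / fact (2 * Suc m - 1) \<le> (1 / 4 :: real)"
    by (intro divide_left_mono) auto
  then have "x < 1 / 2" using assms(5) by linarith
  have in_box: "C t \<subseteq> box m L" if "t \<in> I" for t
    using C[OF that] by (auto simp: slice_def)
  have meet: "C t \<inter> C s \<inter> full_columns (Suc m) L G m \<noteq> {}" if "t \<in> I" "s \<in> I" for t s
    using that by (intro good_slices_meet[OF assms(2) \<open>x < 1 / 2\<close> dense] in_box large)
  have "G \<subseteq> box (Suc m) L" "I \<subseteq> {0..<int L}"
    using dense by (auto simp: column_dense_def I_def)
  then have "\<exists>S \<subseteq> G. nn_connected (Suc m) S \<and> (\<Sum>t\<in>I. card (C t)) \<le> card S"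
    by (rule connected_union_of_slices) (use C meet in auto)
  then obtain S where S: "S \<subseteq> G" "nn_connected (Suc m) S" "(\<Sum>t\<in>I. card (C t)) \<le> card S"
    by blast
  have "(1 - fact (2 * Suc m - 1) * x) * real L ^ Suc m \<le> (\<Sum>t\<in>I. (1 - c * y t) * real L ^ m)"
    using sum_over_good_slices_ge[OF assms(2,4) \<open>1 \<le> c\<close> fact_ge dense] by (simp add: I_def y_def)
  also have "\<dots> \<le> real (\<Sum>t\<in>I. card (C t))"
    unfolding of_nat_sum using C by (intro sum_mono) auto
  also have "\<dots> \<le> real (card S)"
    using S(3) by (simp only: of_nat_le_iff)
  finally show ?thesis using S(1,2) by blast
qed

lemma large_connected_subset:
  assumes "1 \<le> d" "1 \<le> L" "0 \<le> x" "x < 1 / fact (2 * d - 1)" "column_dense d L x G"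
  shows "\<exists>S \<subseteq> G. nn_connected d S \<and> (1 - fact (2 * d - 1) * x) * real L ^ d \<le> real (card S)"
  using assms(1,3-5)
proof (induction d arbitrary: x G rule: nat_induct_at_least)
  case base
  then have "1 - x \<le> real (card (full_columns 1 L G 0))" "x < 1"
    by (auto simp: column_dense_def)
  then have "0 < real (card (full_columns 1 L G 0))"
    by linarith
  then obtain a where "a \<in> full_columns 1 L G 0"
    by (auto simp: card_gt_0_iff)
  then have "line L 0 a \<subseteq> G" "nn_connected 1 (line L 0 a)"
    by (auto simp: full_columns_def intro: nn_connected_line)
  moreover have "(1 - fact (2 * 1 - 1) * x) * real L ^ 1 \<le> real (card (line L 0 a))"
    using base.prems(1) by (simp add: card_line algebra_simps)
  ultimately show ?case by blast
next
  case (Suc m)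
  show ?case
    by (rule large_connected_subset_Suc[OF Suc.hyps assms(2) Suc.IH Suc.prems])
qed

theorem lemma6p1:
  fixes d L :: nat and x :: real and \<Gamma> :: "(nat \<Rightarrow> int) set"
  assumes "d \<ge> 2" and "L \<ge> 1"
    and "0 < x" and "x < 1 / fact (2 * d - 1)"
    and "\<Gamma> \<subseteq> box d L"
    and "\<forall>i<d. real (card {C. column d L i C \<and> C \<subseteq> \<Gamma>}) \<ge> (1 - x) * real L ^ (d - 1)"
  shows "\<exists>S \<subseteq> \<Gamma>. nn_connected d S \<and> real (card S) \<ge> (1 - fact (2 * d - 1) * x) * real L ^ d"
proof -
  have "\<forall>i<d. (1 - x) * real L ^ (d - 1) \<le> real (card (full_columns d L \<Gamma> i))"
    using assms(6) card_columns_subset[OF _ assms(2)] by simp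
  with assms(5) have "column_dense d L x \<Gamma>"
    unfolding column_dense_def by blast
  then show ?thesis
    using large_connected_subset[of d L x \<Gamma>] assms(1-4) by simp
qed

end
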